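(* Under the standing assumptions below, let $\alpha>\alpha_0=5/\sqrt8$. Then $$\eta(\sigma)=\frac\pi2-\beta\Big(\frac\pi2-\sigma\Big)+o\Big(\frac\pi2-\sigma\Big)\quad\text{as }\sigma\to\pi/2^-,$$ where $\beta=\eta'(\pi/2)$ is a constant with $\beta\in[1-\alpha_0/\alpha,\,1]$ (in particular $\beta>0$).
   Context: $L^2=L^2(0,\pi/2)$ with norm $\|f\|=\big(\int_0^{\pi/2}|f|^2\big)^{1/2}$. The kernel is $K(s,\sigma)=\log\Big|\frac{\sin(s+\sigma)}{\sin(s-\sigma)}\Big|$ and $(Hw)(\sigma)=\frac1\pi\int_0^{\pi/2}K(s,\sigma)\,w(s)\,ds$. For $\alpha>0$, $\varPhi(\zeta)(\sigma)=\frac{3}{\alpha\pi}\,\frac{\sin(\sigma+\frac13(H\zeta)(\sigma))\cot\sigma}{\exp\int_0^\sigma\zeta\,ds}$, $\sigma\in(0,\pi/2]$. Standing assumptions: $\zeta_*\in L^2$ is a non-negative solution of $\zeta_*=\varPhi(\zeta_* )$ with $\|\zeta_*\|\leqslant\frac{9\sqrt\pi}2$ and $0\le\sigma+\frac13(H\zeta_* )(\sigma)\le\pi$ for $\sigma\in(0,\pi/2)$, $\theta=\frac13H\zeta_*$, and $\eta(\sigma)=\sigma+\theta(\sigma)$ (so $\eta(\pi/2)=\pi/2$). *)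

theory Defs
  imports "HOL-Analysis.Analysis" "HOL-Library.Landau_Symbols"
begin

text \<open>Functions on (0, pi/2) are represented by real functions; only their values
  on (0, pi/2) matter. Membership in L2(0, pi/2):\<close>
definition in_L2 :: "(real \<Rightarrow> real) \<Rightarrow> bool" where
  "in_L2 f \<longleftrightarrow> set_borel_measurable lborel {0<..<pi/2} f
      \<and> set_integrable lborel {0<..<pi/2} (\<lambda>s. (f s)\<^sup>2)"

definition L2norm :: "(real \<Rightarrow> real) \<Rightarrow> real" where
  "L2norm f = sqrt (LINT s:{0<..<pi/2}|lborel. (f s)\<^sup>2)"

definition Kker :: "real \<Rightarrow> real \<Rightarrow> real" where
  "Kker s \<sigma> = ln \<bar>sin (s + \<sigma>) / sin (s - \<sigma>)\<bar>"

definition Hop :: "(real \<Rightarrow> real) \<Rightarrow> real \<Rightarrow> real" where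
  "Hop w \<sigma> = (1 / pi) * (LINT s:{0<..<pi/2}|lborel. Kker s \<sigma> * w s)"

definition Phi :: "real \<Rightarrow> (real \<Rightarrow> real) \<Rightarrow> real \<Rightarrow> real" where
  "Phi \<alpha> \<zeta> \<sigma> = 3 / (\<alpha> * pi) * (sin (\<sigma> + Hop \<zeta> \<sigma> / 3) * cot \<sigma>)
      / exp (LINT s:{0<..\<sigma>}|lborel. \<zeta> s)"

definition alpha0 :: real where
  "alpha0 = 5 / sqrt 8"

end

theory Submission
  imports Defs "HOL-Real_Asymp.Real_Asymp"
begin

text \<open>Since \<open>K(s, \<pi>/2) = 0\<close>, the difference quotient of \<open>\<eta>\<close> at \<open>\<pi>/2\<close> is
  \<open>1 - Q(\<sigma>)/(3\<pi>)\<close> with \<open>Q(\<sigma>) = \<integral> K(s,\<sigma>) cot s / (\<pi>/2 - \<sigma>) \<cdot> g(s) ds\<close> and \<open>g = \<zeta> tan\<close>.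
  The fixed-point equation gives \<open>0 \<le> g \<le> 3/(\<alpha>\<pi>)\<close>, because the exponential in the
  denominator of \<open>\<Phi>\<close> is at least 1. As \<open>\<sigma> \<rightarrow> \<pi>/2\<close>, the kernel \<open>K(s,\<sigma>) cot s / (\<pi>/2 - \<sigma>)\<close>
  tends to 2 pointwise and stays below 4 away from the diagonal (\<open>s \<le> 2\<sigma> - \<pi>/2\<close>), while near
  the diagonal it has only a logarithmic singularity, whose integral is \<open>O(\<pi>/2 - \<sigma>)\<close>.
  Hence \<open>Q(\<sigma>) \<rightarrow> 2\<integral>g\<close> by dominated convergence, and \<open>\<beta> = 1 - 2\<integral>g/(3\<pi>)\<close> lies in
  \<open>[1 - 1/(\<alpha>\<pi>), 1]\<close>, which is contained in \<open>[1 - \<alpha>\<^sub>0/\<alpha>, 1]\<close> since \<open>\<alpha>\<^sub>0 \<ge> 1\<close>.\<close>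

lemma has_real_derivative_at_left_smallo:
  fixes f :: "real \<Rightarrow> real"
  assumes "(f has_real_derivative D) (at_left a)"
  shows "(\<lambda>x. f x - (f a - D * (a - x))) \<in> o[at_left a](\<lambda>x. a - x)"
proof (rule smalloI_tendsto)
  have ev: "\<forall>\<^sub>F x in at_left a. x < a"
    by (simp add: eventually_at_filter)
  have "((\<lambda>x. D - (f x - f a) / (x - a)) \<longlongrightarrow> D - D) (at_left a)"
    using assms by (intro tendsto_intros) (simp add: has_field_derivative_iff)
  moreover have "\<forall>\<^sub>F x in at_left a. D - (f x - f a) / (x - a) = (f x - (f a - D * (a - x))) / (a - x)"
    using ev by eventually_elim (simp add: field_simps)
  ultimately show "((\<lambda>x. (f x - (f a - D * (a - x))) / (a - x)) \<longlongrightarrow> 0) (at_left a)"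
    by (simp add: Lim_transform_eventually)
  show "\<forall>\<^sub>F x in at_left a. a - x \<noteq> 0"
    using ev by eventually_elim simp
qed

lemma continuous_on_x_ln_abs: "continuous_on UNIV (\<lambda>x::real. x * ln \<bar>x\<bar>)"
proof -
  have "isCont (\<lambda>x::real. x * ln \<bar>x\<bar>) x" for x
  proof (cases "x = 0")
    case True
    have "((\<lambda>x::real. x * ln \<bar>x\<bar>) \<longlongrightarrow> 0) (at 0)" by real_asymp
    then show ?thesis using True by (simp add: isCont_def)
  qed (intro continuous_intros; auto)
  then show ?thesis by (simp add: continuous_at_imp_continuous_on)
qed

lemma has_real_derivative_x_minus_x_ln_abs:
  fixes c y :: real
  assumes "y \<noteq> c"
  shows "((\<lambda>y. y - (y - c) * ln \<bar>y - c\<bar>) has_real_derivative - ln \<bar>y - c\<bar>) (at y)"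
proof (cases "y > c")
  case True
  have "((\<lambda>y. y - (y - c) * ln (y - c)) has_real_derivative - ln (y - c)) (at y)"
    using True by (auto intro!: derivative_eq_intros)
  moreover have "\<forall>\<^sub>F z in nhds y. z - (z - c) * ln (z - c) = z - (z - c) * ln \<bar>z - c\<bar>"
    using eventually_nhds_in_open[of "{c<..}" y] True by (auto elim!: eventually_mono)
  ultimately show ?thesis using True
    by (subst (asm) has_field_derivative_cong_ev) auto
next
  case False
  with assms have "y < c" by auto
  have "((\<lambda>y. y - (y - c) * ln (c - y)) has_real_derivative - ln (c - y)) (at y)"
    using \<open>y < c\<close> by (auto intro!: derivative_eq_intros) (simp add: divide_simps)
  moreover have "\<forall>\<^sub>F z in nhds y. z - (z - c) * ln (c - z) = z - (z - c) * ln \<bar>z - c\<bar>"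
    using eventually_nhds_in_open[of "{..<c}" y] \<open>y < c\<close> by (auto elim!: eventually_mono)
  ultimately show ?thesis using \<open>y < c\<close>
    by (subst (asm) has_field_derivative_cong_ev) auto
qed

lemma neg_ln_abs_integral_centered:
  fixes c a :: real
  assumes a: "0 < a" "a \<le> 1"
  shows "set_integrable lborel {c-a..c+a} (\<lambda>y. - ln \<bar>y - c\<bar>)"
    and "(LINT y:{c-a..c+a}|lborel. - ln \<bar>y - c\<bar>) = 2 * (a - a * ln a)"
proof -
  let ?F = "\<lambda>y::real. y - (y - c) * ln \<bar>y - c\<bar>"
  have "continuous_on UNIV (\<lambda>y::real. (y - c) * ln \<bar>y - c\<bar>)"
    by (rule continuous_on_compose2[OF continuous_on_x_ln_abs]) (auto intro: continuous_intros)
  then have "continuous_on {c-a..c+a} ?F"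
    by (intro continuous_on_diff continuous_on_id) (auto elim: continuous_on_subset)
  then have F: "((\<lambda>y. - ln \<bar>y - c\<bar>) has_integral (?F (c+a) - ?F (c-a))) {c-a..c+a}"
    using a by (intro fundamental_theorem_of_calculus_interior_strong[of "{c}"])
      (auto intro!: has_real_derivative_x_minus_x_ln_abs
        simp: has_real_derivative_iff_has_vector_derivative[symmetric])
  have "0 \<le> - ln \<bar>y - c\<bar>" if "y \<in> {c-a..c+a}" for y
    using that a by (cases "y = c") (auto simp: ln_le_zero_iff)
  then have "(\<lambda>y. - ln \<bar>y - c\<bar>) absolutely_integrable_on {c-a..c+a}"
    using F by (intro nonnegative_absolutely_integrable_1) (auto simp: integrable_on_def)
  then show si: "set_integrable lborel {c-a..c+a} (\<lambda>y. - ln \<bar>y - c\<bar>)"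
    unfolding set_integrable_def by (subst integrable_completion[symmetric]) auto
  have "?F (c+a) - ?F (c-a) = 2 * (a - a * ln a)"
    using a by simp
  then show "(LINT y:{c-a..c+a}|lborel. - ln \<bar>y - c\<bar>) = 2 * (a - a * ln a)"
    using set_borel_integral_eq_integral(2)[OF si] F integral_unique by metis
qed

lemma ln_ratio_integral_centered:
  fixes c k t :: real
  assumes "0 < k" "0 < t" "t \<le> 1"
  shows "set_integrable lborel {c-t..c+t} (\<lambda>s. ln (k * t) - ln \<bar>s - c\<bar>)"
    and "(LINT s:{c-t..c+t}|lborel. ln (k * t) - ln \<bar>s - c\<bar>) = 2 * (ln k + 1) * t"
proof -
  have const: "set_integrable lborel {c-t..c+t} (\<lambda>s. ln (k * t))"
    using assms by (simp add: set_integrable_def integrable_indicator_iff emeasure_lborel_Icc)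
  note log = neg_ln_abs_integral_centered[OF assms(2,3), of c]
  show "set_integrable lborel {c-t..c+t} (\<lambda>s. ln (k * t) - ln \<bar>s - c\<bar>)"
    using set_integral_add(1)[OF const log(1)] by simp
  have "(LINT s:{c-t..c+t}|lborel. ln (k * t) + - ln \<bar>s - c\<bar>)
      = (LINT s:{c-t..c+t}|lborel. ln (k * t)) + (LINT s:{c-t..c+t}|lborel. - ln \<bar>s - c\<bar>)"
    by (rule set_integral_add(2)[OF const log(1)])
  then have "(LINT s:{c-t..c+t}|lborel. ln (k * t) - ln \<bar>s - c\<bar>) = 2 * t * ln (k * t) + 2 * (t - t * ln t)"
    using assms by (simp add: set_integral_const log(2))
  also have "\<dots> = 2 * (ln k + 1) * t"
    using assms by (simp add: ln_mult algebra_simps)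
  finally show "(LINT s:{c-t..c+t}|lborel. ln (k * t) - ln \<bar>s - c\<bar>) = 2 * (ln k + 1) * t" .
qed

lemma abs_sin_ge_half_abs:
  fixes y :: real
  assumes "\<bar>y\<bar> \<le> 1"
  shows "\<bar>y\<bar> / 2 \<le> \<bar>sin y\<bar>"
proof -
  have "x / 2 \<le> sin x" if "0 < x" "x \<le> 1" for x :: real
  proof -
    obtain z where z: "0 < z" "z < x" "sin x - sin 0 = (x - 0) * cos z"
      using MVT2[OF \<open>0 < x\<close>, of sin cos] by (auto intro: DERIV_sin)
    have "cos (pi/3) \<le> cos z"
      using z that pi_gt3 by (intro cos_monotone_0_pi_le) auto
    then show ?thesis
      using z \<open>0 < x\<close> mult_left_mono[of "1/2" "cos z" x] by (simp add: cos_60)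
  qed
  from this[of y] this[of "-y"] assms show ?thesis
    by (cases y "0::real" rule: linorder_cases) auto
qed

lemma cot_bounds_near_pi_half:
  fixes s :: real
  assumes "pi/4 \<le> s" "s < pi/2"
  shows "0 \<le> cot s" and "cot s \<le> 3/2 * (pi/2 - s)"
proof -
  have cs: "0 \<le> cos s" "cos s \<le> pi/2 - s"
    using assms sin_x_le_x[of "pi/2 - s"] by (auto intro!: cos_ge_zero simp: sin_cos_eq)
  have "sqrt 2 / 2 \<le> sin s"
    using assms cos_monotone_0_pi_le[of "pi/2 - s" "pi/4"] by (simp add: cos_45 sin_45 cos_sin_eq)
  moreover have "(4/3::real) \<le> sqrt 2"
    by (rule real_le_rsqrt) (simp add: power2_eq_square)
  ultimately have ss: "2/3 \<le> sin s" by simp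
  show "0 \<le> cot s"
    using cs ss by (simp add: cot_def)
  have "cot s \<le> (pi/2 - s) / (2/3)"
    unfolding cot_def using cs ss by (intro frac_le) auto
  then show "cot s \<le> 3/2 * (pi/2 - s)" by simp
qed

lemma Kker_at_pi_half: "Kker s (pi/2) = 0"
  by (simp add: Kker_def sin_add sin_diff)

lemma Kker_nonneg:
  assumes "0 < s" "s < pi/2" "0 < \<sigma>" "\<sigma> < pi/2"
  shows "0 \<le> Kker s \<sigma>"
proof -
  have "0 < sin (s + \<sigma>)"
    using assms by (intro sin_gt_zero) auto
  moreover have "0 \<le> sin s * cos \<sigma>" "0 \<le> cos s * sin \<sigma>"
    using assms by (auto intro!: mult_nonneg_nonneg sin_ge_zero cos_ge_zero)
  then have "\<bar>sin (s - \<sigma>)\<bar> \<le> sin (s + \<sigma>)"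
    by (simp add: sin_add sin_diff)
  ultimately show ?thesis
    by (cases "sin (s - \<sigma>) = 0") (auto simp: Kker_def abs_div le_divide_eq)
qed

text \<open>Because \<open>Kker s (pi/2) = 0\<close>, \<open>Kslope \<sigma> s\<close> is \<open>-cot s\<close> times the difference quotient
  of \<open>Kker s\<close> at \<open>pi/2\<close>.\<close>
definition Kslope :: "real \<Rightarrow> real \<Rightarrow> real" where
  "Kslope \<sigma> s = Kker s \<sigma> * cot s / (pi/2 - \<sigma>)"

lemma borel_measurable_cot [measurable]: "(cot :: real \<Rightarrow> real) \<in> borel_measurable borel"
  unfolding cot_def by measurable

lemma borel_measurable_tan [measurable]: "(tan :: real \<Rightarrow> real) \<in> borel_measurable borel"
  unfolding tan_def by measurable

lemma borel_measurable_Kslope [measurable]: "Kslope \<sigma> \<in> borel_measurable borel"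
  unfolding Kslope_def Kker_def by measurable

lemma ln_sin_ratio_bounds:
  fixes a t :: real
  assumes t: "0 < t" "2 * t \<le> a" "a < pi/2"
  shows "0 \<le> ln (sin (a + t) / sin (a - t)) * (sin a / cos a) / t"
    and "ln (sin (a + t) / sin (a - t)) * (sin a / cos a) / t \<le> 4"
proof -
  have pos: "0 < sin (a - t)" "0 < cos a" "0 < sin a" "0 < sin t"
    using t by (auto intro!: sin_gt_zero cos_gt_zero)
  have diff: "sin (a + t) - sin (a - t) = 2 * cos a * sin t"
    by (simp add: sin_add sin_diff)
  then have "sin (a - t) \<le> sin (a + t)"
    using mult_pos_pos[OF pos(2,4)] by linarith
  then have ratio: "1 \<le> sin (a + t) / sin (a - t)"
    using pos by (simp add: le_divide_eq)
  then show "0 \<le> ln (sin (a + t) / sin (a - t)) * (sin a / cos a) / t"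
    using pos t by simp
  have "ln (sin (a + t) / sin (a - t)) \<le> sin (a + t) / sin (a - t) - 1"
    using ratio by (intro ln_le_minus_one) auto
  also have "\<dots> = 2 * cos a * sin t / sin (a - t)"
    using diff pos by (simp add: field_simps)
  finally have ln_le: "ln (sin (a + t) / sin (a - t)) \<le> 2 * cos a * sin t / sin (a - t)" .
  have "sin t \<le> sin (a - t)"
    using t by (intro sin_monotone_2pi_le) auto
  moreover have "sin (a - t) * cos t \<le> sin (a - t)"
    using pos by (intro mult_left_le) auto
  moreover have "cos (a - t) * sin t \<le> sin t"
    using pos by (intro mult_left_le_one_le) (use t in \<open>auto intro!: cos_ge_zero\<close>)
  ultimately have sin_a: "sin a \<le> 2 * sin (a - t)"
    using sin_add[of "a - t" t] by simp
  have "ln (sin (a + t) / sin (a - t)) * (sin a / cos a) / t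
        \<le> (2 * cos a * sin t / sin (a - t)) * (sin a / cos a) / t"
    using ln_le pos t by (intro divide_right_mono mult_right_mono) auto
  also have "\<dots> = 2 * (sin t / t) * (sin a / sin (a - t))"
    using pos t by (simp add: field_simps)
  also have "\<dots> \<le> 2 * 1 * 2"
  proof (intro mult_mono)
    show "sin t / t \<le> 1"
      using sin_x_le_x[of t] t by simp
    show "sin a / sin (a - t) \<le> 2"
      using sin_a pos by (simp add: divide_le_eq)
  qed (use pos t in auto)
  finally show "ln (sin (a + t) / sin (a - t)) * (sin a / cos a) / t \<le> 4" by simp
qed

lemma Kslope_far_bounds:
  assumes "0 < s" "s \<le> 2 * \<sigma> - pi/2" "\<sigma> < pi/2"
  shows "0 \<le> Kslope \<sigma> s" and "Kslope \<sigma> s \<le> 4"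
proof -
  define a t where "a = pi/2 - s" and "t = pi/2 - \<sigma>"
  have t: "0 < t" "2 * t \<le> a" "a < pi/2"
    using assms by (auto simp: a_def t_def)
  have "s + \<sigma> = pi - (a + t)" "s - \<sigma> = - (a - t)"
    by (simp_all add: a_def t_def)
  then have "sin (s + \<sigma>) = sin (a + t)" "sin (s - \<sigma>) = - sin (a - t)"
    by (metis sin_pi_minus, metis sin_minus)
  moreover have "0 < sin (a - t)" "0 < sin (a + t)"
    using t by (auto intro!: sin_gt_zero)
  ultimately have "Kker s \<sigma> = ln (sin (a + t) / sin (a - t))"
    by (simp add: Kker_def abs_div)
  moreover have "cot s = sin a / cos a"
    by (simp add: a_def tan_cot'[symmetric] tan_def)
  ultimately have "Kslope \<sigma> s = ln (sin (a + t) / sin (a - t)) * (sin a / cos a) / t"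
    by (simp add: Kslope_def t_def)
  then show "0 \<le> Kslope \<sigma> s" "Kslope \<sigma> s \<le> 4"
    using ln_sin_ratio_bounds[OF t] by simp_all
qed

lemma Kker_le_near_diagonal:
  assumes s: "\<sigma> - (pi/2 - \<sigma>) \<le> s" "s < pi/2" "s \<noteq> \<sigma>" and \<sigma>: "pi/2 - \<sigma> \<le> 1/10"
  shows "Kker s \<sigma> \<le> ln (6 * (pi/2 - \<sigma>)) - ln \<bar>s - \<sigma>\<bar>"
proof -
  define t where "t = pi/2 - \<sigma>"
  have t: "\<bar>s - \<sigma>\<bar> \<le> t" "0 < \<bar>s - \<sigma>\<bar>" "t \<le> 1/10"
    using s \<sigma> by (auto simp: t_def)
  have "0 < s" "0 < \<sigma>"
    using s \<sigma> pi_gt3 by (auto simp: t_def)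
  then have sin_plus: "0 < sin (s + \<sigma>)"
    using s t by (intro sin_gt_zero) (auto simp: t_def)
  have "sin (s + \<sigma>) = sin (pi - (s + \<sigma>))"
    by simp
  also have "\<dots> \<le> pi - (s + \<sigma>)"
    using s t by (intro sin_x_le_x) (auto simp: t_def)
  finally have "sin (s + \<sigma>) \<le> 3 * t"
    using s by (simp add: t_def)
  moreover have "\<bar>s - \<sigma>\<bar> / 2 \<le> \<bar>sin (s - \<sigma>)\<bar>"
    using t by (intro abs_sin_ge_half_abs) auto
  ultimately have "ln (sin (s + \<sigma>) / \<bar>sin (s - \<sigma>)\<bar>) \<le> ln ((3 * t) / (\<bar>s - \<sigma>\<bar> / 2))"
    using sin_plus t by (intro ln_mono frac_le) auto
  also have "\<dots> = ln (6 * t) - ln \<bar>s - \<sigma>\<bar>"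
    using t by (simp add: ln_div)
  finally show ?thesis
    using sin_plus by (simp add: Kker_def abs_div t_def)
qed

lemma Kslope_near_bounds:
  assumes s: "\<sigma> - (pi/2 - \<sigma>) \<le> s" "s < pi/2" "s \<noteq> \<sigma>" and \<sigma>: "\<sigma> < pi/2" "pi/2 - \<sigma> \<le> 1/10"
  shows "0 \<le> Kslope \<sigma> s" and "Kslope \<sigma> s \<le> 3 * (ln (6 * (pi/2 - \<sigma>)) - ln \<bar>s - \<sigma>\<bar>)"
proof -
  have "pi/4 \<le> s" "0 < \<sigma>"
    using s \<sigma> pi_gt3 by linarith+
  note cot = cot_bounds_near_pi_half[OF this(1) s(2)]
  have K: "0 \<le> Kker s \<sigma>"
    using s \<sigma> \<open>pi/4 \<le> s\<close> \<open>0 < \<sigma>\<close> pi_gt3 by (intro Kker_nonneg) linarith+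
  show "0 \<le> Kslope \<sigma> s"
    using K cot \<sigma> by (simp add: Kslope_def)
  have "cot s \<le> 3 * (pi/2 - \<sigma>)"
    using cot(2) s by simp
  then have "Kslope \<sigma> s \<le> Kker s \<sigma> * (3 * (pi/2 - \<sigma>)) / (pi/2 - \<sigma>)"
    unfolding Kslope_def using K \<sigma> by (intro divide_right_mono mult_left_mono) auto
  also have "\<dots> = 3 * Kker s \<sigma>"
    using \<sigma> by (simp add: nonzero_divide_eq_eq)
  also have "\<dots> \<le> 3 * (ln (6 * (pi/2 - \<sigma>)) - ln \<bar>s - \<sigma>\<bar>)"
    using Kker_le_near_diagonal[OF s \<sigma>(2)] by simp
  finally show "Kslope \<sigma> s \<le> 3 * (ln (6 * (pi/2 - \<sigma>)) - ln \<bar>s - \<sigma>\<bar>)" .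
qed

lemma Kslope_tendsto:
  assumes s: "0 < s" "s < pi/2"
  shows "((\<lambda>\<sigma>. Kslope \<sigma> s) \<longlongrightarrow> 2) (at_left (pi/2))"
proof -
  define h where "h \<sigma> = ln (sin (s + \<sigma>)) - ln (- sin (s - \<sigma>))" for \<sigma>
  have pos: "0 < cos s" "0 < sin s"
    using s by (auto intro!: cos_gt_zero sin_gt_zero)
  have "(h has_real_derivative - 2 * tan s) (at (pi/2))"
    unfolding h_def using pos
    by (auto intro!: derivative_eq_intros simp: sin_add sin_diff cos_add cos_diff tan_def)
  then have "((\<lambda>\<sigma>. (h \<sigma> - h (pi/2)) / (\<sigma> - pi/2)) \<longlongrightarrow> - 2 * tan s) (at_left (pi/2))"
    by (simp add: has_field_derivative_iff filterlim_at_split)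
  then have lim: "((\<lambda>\<sigma>. - ((h \<sigma> - h (pi/2)) / (\<sigma> - pi/2)) * cot s) \<longlongrightarrow> - (- 2 * tan s) * cot s)
      (at_left (pi/2))"
    by (intro tendsto_intros)
  have ev: "\<forall>\<^sub>F \<sigma> in at_left (pi/2). - ((h \<sigma> - h (pi/2)) / (\<sigma> - pi/2)) * cot s = Kslope \<sigma> s"
    using eventually_at_left_real[OF s(2)]
  proof (rule eventually_mono)
    fix \<sigma> assume \<sigma>: "\<sigma> \<in> {s<..<pi/2}"
    have "0 < sin (s + \<sigma>)" "0 < sin (\<sigma> - s)"
      using \<sigma> s by (auto intro!: sin_gt_zero)
    moreover have "sin (s - \<sigma>) = - sin (\<sigma> - s)"
      by (metis minus_diff_eq sin_minus)
    ultimately have "Kker s \<sigma> = h \<sigma>"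
      by (simp add: Kker_def h_def abs_div ln_div)
    moreover have "h (pi/2) = 0"
      by (simp add: h_def sin_add sin_diff)
    ultimately show "- ((h \<sigma> - h (pi/2)) / (\<sigma> - pi/2)) * cot s = Kslope \<sigma> s"
      using \<sigma> by (simp add: Kslope_def field_simps)
  qed
  moreover have "- (- 2 * tan s) * cot s = 2"
    using pos by (simp add: tan_def cot_def)
  ultimately show ?thesis
    using Lim_transform_eventually[OF lim ev] by metis
qed

lemma integrable_indicator_Ioo_mult:
  fixes a b c :: real
  shows "integrable lborel (\<lambda>s. indicator {a<..<b} s * c)"
  using emeasure_bounded_finite[of "{a<..<b}"]
  by (intro integrable_mult_left) (simp add: integrable_indicator_iff)

context
  fixes g :: "real \<Rightarrow> real" and C :: real
  assumes g_measurable [measurable]: "g \<in> borel_measurable lborel"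
    and g_bounds: "AE s in lborel. 0 \<le> g s \<and> g s \<le> C"
    and g_outside: "\<And>s. s \<notin> {0<..<pi/2} \<Longrightarrow> g s = 0"
    and C_nonneg: "0 \<le> C"
begin

lemma weight_le_indicator: "AE s in lborel. 0 \<le> g s \<and> g s \<le> indicator {0<..<pi/2} s * C"
  using g_bounds by eventually_elim (use g_outside in \<open>auto simp: indicator_def\<close>)

lemma integrable_weight: "integrable lborel g"
proof (rule Bochner_Integration.integrable_bound[OF integrable_indicator_Ioo_mult])
  show "AE s in lborel. norm (g s) \<le> norm (indicator {0<..<pi/2} s * C)"
    using weight_le_indicator by eventually_elim auto
qed measurable

lemma integral_weight_bounds: "0 \<le> integral\<^sup>L lborel g" "integral\<^sup>L lborel g \<le> C * (pi/2)"
proof -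
  show "0 \<le> integral\<^sup>L lborel g"
    using g_bounds by (intro integral_nonneg_AE) (auto elim: eventually_mono)
  have "integral\<^sup>L lborel g \<le> (LINT s|lborel. indicator {0<..<pi/2} s * C)"
    using weight_le_indicator
    by (intro integral_mono_AE integrable_weight integrable_indicator_Ioo_mult)
      (auto elim: eventually_mono)
  then show "integral\<^sup>L lborel g \<le> C * (pi/2)"
    by (simp add: ac_simps)
qed

lemma Kslope_far_dominated:
  assumes "\<sigma> < pi/2"
  shows "AE s in lborel. norm (indicator {0<..<2*\<sigma> - pi/2} s * (Kslope \<sigma> s * g s))
    \<le> indicator {0<..<pi/2} s * (4 * C)"
  using g_bounds
proof eventually_elim
  case (elim s)
  show ?case
  proof (cases "s \<in> {0<..<2*\<sigma> - pi/2}")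
    case True
    then have K: "0 \<le> Kslope \<sigma> s" "Kslope \<sigma> s \<le> 4"
      using Kslope_far_bounds[of s \<sigma>] assms by auto
    then have "Kslope \<sigma> s * g s \<le> 4 * C"
      using elim by (intro mult_mono) auto
    moreover have "s \<in> {0<..<pi/2}"
      using True assms by simp
    ultimately show ?thesis
      using True K elim by simp
  qed (use C_nonneg in simp)
qed

lemma integrable_Kslope_far:
  assumes "\<sigma> < pi/2"
  shows "integrable lborel (\<lambda>s. indicator {0<..<2*\<sigma> - pi/2} s * (Kslope \<sigma> s * g s))"
proof (rule Bochner_Integration.integrable_bound)
  show "integrable lborel (\<lambda>s. indicator {0<..<pi/2} s * (4 * C))"
    by (rule integrable_indicator_Ioo_mult)
  show "AE s in lborel. norm (indicator {0<..<2*\<sigma> - pi/2} s * (Kslope \<sigma> s * g s))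
    \<le> norm (indicator {0<..<pi/2} s * (4 * C))"
    using Kslope_far_dominated[OF assms] by eventually_elim simp
qed measurable

lemma Kslope_far_integral_tendsto:
  "((\<lambda>\<sigma>. LINT s|lborel. indicator {0<..<2*\<sigma> - pi/2} s * (Kslope \<sigma> s * g s))
    \<longlongrightarrow> 2 * integral\<^sup>L lborel g) (at_left (pi/2))"
proof (rule tendsto_at_left_sequentially[of 0])
  fix X :: "nat \<Rightarrow> real"
  assume X: "\<And>n. X n < pi/2" "\<And>n. 0 < X n" "incseq X" "X \<longlonglongrightarrow> pi/2"
  have X_at_left: "filterlim X (at_left (pi/2)) sequentially"
    using X by (intro tendsto_imp_filterlim_at_left) auto
  have "(\<lambda>n. LINT s|lborel. indicator {0<..<2 * X n - pi/2} s * (Kslope (X n) s * g s))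
    \<longlonglongrightarrow> (LINT s|lborel. 2 * g s)"
  proof (rule integral_dominated_convergence[where w = "\<lambda>s. indicator {0<..<pi/2} s * (4 * C)"])
    show "integrable lborel (\<lambda>s. indicator {0<..<pi/2} s * (4 * C))"
      by (rule integrable_indicator_Ioo_mult)
    show "AE s in lborel. norm (indicator {0<..<2 * X n - pi/2} s * (Kslope (X n) s * g s))
      \<le> indicator {0<..<pi/2} s * (4 * C)" for n
      using Kslope_far_dominated[OF X(1)] .
    show "AE s in lborel.
      (\<lambda>n. indicator {0<..<2 * X n - pi/2} s * (Kslope (X n) s * g s)) \<longlonglongrightarrow> 2 * g s"
    proof (rule AE_I2)
      fix s :: real
      show "(\<lambda>n. indicator {0<..<2 * X n - pi/2} s * (Kslope (X n) s * g s)) \<longlonglongrightarrow> 2 * g s"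
      proof (cases "s \<in> {0<..<pi/2}")
        case True
        have "(\<lambda>n. 2 * X n - pi/2) \<longlonglongrightarrow> 2 * (pi/2) - pi/2"
          by (intro tendsto_intros X(4))
        then have "\<forall>\<^sub>F n in sequentially. s < 2 * X n - pi/2"
          using True by (intro order_tendstoD(1)) auto
        then have "\<forall>\<^sub>F n in sequentially.
          Kslope (X n) s * g s = indicator {0<..<2 * X n - pi/2} s * (Kslope (X n) s * g s)"
          by eventually_elim (use True in auto)
        moreover have "(\<lambda>n. Kslope (X n) s * g s) \<longlonglongrightarrow> 2 * g s"
          using filterlim_compose[OF Kslope_tendsto X_at_left] True by (auto intro: tendsto_intros)
        ultimately show ?thesis
          by (rule Lim_transform_eventually[rotated])
      qed (simp add: g_outside)
    qed
  qed measurable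
  then show "(\<lambda>n. LINT s|lborel. indicator {0<..<2 * X n - pi/2} s * (Kslope (X n) s * g s))
    \<longlonglongrightarrow> 2 * integral\<^sup>L lborel g"
    by simp
qed (simp add: pi_gt_zero)

lemma Kslope_near_integral_bound:
  assumes \<sigma>: "pi/2 - 1/10 < \<sigma>" "\<sigma> < pi/2"
  shows "integrable lborel (\<lambda>s. indicator {2*\<sigma> - pi/2..} s * (Kslope \<sigma> s * g s))"
    and "\<bar>LINT s|lborel. indicator {2*\<sigma> - pi/2..} s * (Kslope \<sigma> s * g s)\<bar>
      \<le> 6 * C * (ln 6 + 1) * (pi/2 - \<sigma>)"
proof -
  define t where "t = pi/2 - \<sigma>"
  have t: "0 < t" "t \<le> 1/10"
    using \<sigma> by (auto simp: t_def)
  define I where "I = {\<sigma> - t..\<sigma> + t}"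
  define w where "w s = 3 * C * (indicator I s *\<^sub>R (ln (6 * t) - ln \<bar>s - \<sigma>\<bar>))" for s
  note log = ln_ratio_integral_centered[of 6 t \<sigma>, folded I_def]
  have w_integrable: "integrable lborel w"
    using log(1) t unfolding w_def set_integrable_def by (intro integrable_mult_right) auto
  have w_integral: "integral\<^sup>L lborel w = 6 * C * (ln 6 + 1) * t"
    unfolding w_def using log(2) t by (simp add: set_lebesgue_integral_def)
  have bound: "AE s in lborel. norm (indicator {2*\<sigma> - pi/2..} s * (Kslope \<sigma> s * g s)) \<le> w s"
    using g_bounds AE_lborel_singleton[of \<sigma>]
  proof eventually_elim
    case (elim s)
    have w_nonneg: "0 \<le> w s"
    proof (cases "s \<in> I")
      case True
      then have "ln \<bar>s - \<sigma>\<bar> \<le> ln (6 * t)"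
        using elim(2) t by (intro ln_mono) (auto simp: I_def)
      then show ?thesis
        using True C_nonneg by (simp add: w_def)
    qed (simp add: w_def)
    show ?case
    proof (cases "s \<in> {0<..<pi/2} \<and> 2*\<sigma> - pi/2 \<le> s")
      case True
      then have s: "\<sigma> - (pi/2 - \<sigma>) \<le> s" "s < pi/2" "s \<in> I"
        by (auto simp: I_def t_def)
      have "pi/2 - \<sigma> \<le> 1/10"
        using \<sigma>(1) by simp
      note K = Kslope_near_bounds[OF s(1,2) elim(2) \<sigma>(2) this]
      have "0 \<le> 3 * (ln (6 * t) - ln \<bar>s - \<sigma>\<bar>)"
        using K unfolding t_def by linarith
      then have "Kslope \<sigma> s * g s \<le> 3 * (ln (6 * t) - ln \<bar>s - \<sigma>\<bar>) * C"
        using K elim unfolding t_def by (intro mult_mono) auto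
      moreover have "w s = 3 * (ln (6 * t) - ln \<bar>s - \<sigma>\<bar>) * C"
        using s(3) by (simp add: w_def)
      moreover have "0 \<le> Kslope \<sigma> s * g s"
        using K elim by simp
      ultimately show ?thesis
        using True by simp
    next
      case False
      then show ?thesis
        using w_nonneg g_outside by auto
    qed
  qed
  show integrable: "integrable lborel (\<lambda>s. indicator {2*\<sigma> - pi/2..} s * (Kslope \<sigma> s * g s))"
  proof (rule Bochner_Integration.integrable_bound[OF w_integrable])
    show "AE s in lborel. norm (indicator {2*\<sigma> - pi/2..} s * (Kslope \<sigma> s * g s)) \<le> norm (w s)"
      using bound by eventually_elim (rule order_trans, assumption, simp)
  qed measurable
  have "norm (LINT s|lborel. indicator {2*\<sigma> - pi/2..} s * (Kslope \<sigma> s * g s))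
      \<le> (LINT s|lborel. norm (indicator {2*\<sigma> - pi/2..} s * (Kslope \<sigma> s * g s)))"
    by (rule Bochner_Integration.integral_norm_bound)
  also have "\<dots> \<le> integral\<^sup>L lborel w"
    using bound by (intro integral_mono_AE integrable_norm integrable w_integrable)
  finally show "\<bar>LINT s|lborel. indicator {2*\<sigma> - pi/2..} s * (Kslope \<sigma> s * g s)\<bar>
      \<le> 6 * C * (ln 6 + 1) * (pi/2 - \<sigma>)"
    by (simp add: w_integral t_def)
qed

lemma Kslope_integral_tendsto:
  "((\<lambda>\<sigma>. LINT s|lborel. Kslope \<sigma> s * g s) \<longlongrightarrow> 2 * integral\<^sup>L lborel g) (at_left (pi/2))"
proof -
  let ?far = "\<lambda>\<sigma>. LINT s|lborel. indicator {0<..<2*\<sigma> - pi/2} s * (Kslope \<sigma> s * g s)"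
  let ?near = "\<lambda>\<sigma>. LINT s|lborel. indicator {2*\<sigma> - pi/2..} s * (Kslope \<sigma> s * g s)"
  have ev: "\<forall>\<^sub>F \<sigma> in at_left (pi/2). \<sigma> \<in> {pi/2 - 1/10<..<pi/2}"
    by (intro eventually_at_left_real) simp
  have "(?near \<longlongrightarrow> 0) (at_left (pi/2))"
  proof (rule Lim_null_comparison)
    show "\<forall>\<^sub>F \<sigma> in at_left (pi/2). norm (?near \<sigma>) \<le> 6 * C * (ln 6 + 1) * (pi/2 - \<sigma>)"
      using ev by eventually_elim (use Kslope_near_integral_bound(2) in auto)
    show "((\<lambda>\<sigma>. 6 * C * (ln 6 + 1) * (pi/2 - \<sigma>)) \<longlongrightarrow> 0) (at_left (pi/2))"
      by (rule tendsto_eq_intros refl)+ simp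
  qed
  then have "((\<lambda>\<sigma>. ?far \<sigma> + ?near \<sigma>) \<longlongrightarrow> 2 * integral\<^sup>L lborel g + 0) (at_left (pi/2))"
    by (intro tendsto_add Kslope_far_integral_tendsto)
  moreover have "\<forall>\<^sub>F \<sigma> in at_left (pi/2). ?far \<sigma> + ?near \<sigma> = (LINT s|lborel. Kslope \<sigma> s * g s)"
    using ev
  proof eventually_elim
    case (elim \<sigma>)
    have "Kslope \<sigma> s * g s = indicator {0<..<2*\<sigma> - pi/2} s * (Kslope \<sigma> s * g s)
        + indicator {2*\<sigma> - pi/2..} s * (Kslope \<sigma> s * g s)" for s
      using elim g_outside[of s] by (auto simp: indicator_def)
    then show ?case
      using elim by (simp add: Bochner_Integration.integral_add[symmetric]
          integrable_Kslope_far Kslope_near_integral_bound(1))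
  qed
  ultimately show ?thesis
    by (simp add: Lim_transform_eventually)
qed

end

lemma Phi_fixpoint_tan_bounds:
  fixes \<alpha> :: real and \<zeta> :: "real \<Rightarrow> real"
  assumes "\<alpha> > 0"
    and nonneg: "AE s in lborel. s \<in> {0<..<pi/2} \<longrightarrow> \<zeta> s \<ge> 0"
    and fixpt: "AE s in lborel. s \<in> {0<..<pi/2} \<longrightarrow> \<zeta> s = Phi \<alpha> \<zeta> s"
  shows "AE s in lborel. s \<in> {0<..<pi/2} \<longrightarrow> 0 \<le> \<zeta> s * tan s \<and> \<zeta> s * tan s \<le> 3 / (\<alpha> * pi)"
  using nonneg fixpt
proof eventually_elim
  case (elim s)
  show ?case
  proof
    assume s: "s \<in> {0<..<pi/2}"
    have pos: "0 < cos s" "0 < sin s" "0 < tan s"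
      using s by (auto intro!: cos_gt_zero sin_gt_zero tan_gt_zero)
    define I where "I = (LINT u:{0<..s}|lborel. \<zeta> u)"
    have "0 \<le> I"
      unfolding I_def set_lebesgue_integral_def
    proof (rule integral_nonneg_AE)
      show "AE u in lborel. 0 \<le> indicator {0<..s} u *\<^sub>R \<zeta> u"
        using nonneg by eventually_elim (use s in \<open>auto simp: indicator_def\<close>)
    qed
    then have "sin (s + Hop \<zeta> s / 3) \<le> exp I"
      using sin_le_one[of "s + Hop \<zeta> s / 3"] one_le_exp_iff[of I] by linarith
    then have "sin (s + Hop \<zeta> s / 3) / exp I \<le> 1"
      by simp
    then have "3 / (\<alpha> * pi) * (sin (s + Hop \<zeta> s / 3) / exp I) \<le> 3 / (\<alpha> * pi)"
      using \<open>\<alpha> > 0\<close> by (intro mult_left_le) auto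
    moreover have "\<zeta> s * tan s = 3 / (\<alpha> * pi) * (sin (s + Hop \<zeta> s / 3) / exp I)"
      using elim(2) s pos unfolding Phi_def I_def by (simp add: tan_def cot_def field_simps)
    moreover have "0 \<le> \<zeta> s * tan s"
      using elim(1) s pos by simp
    ultimately show "0 \<le> \<zeta> s * tan s \<and> \<zeta> s * tan s \<le> 3 / (\<alpha> * pi)"
      by simp
  qed
qed

lemma Hop_at_pi_half: "Hop w (pi/2) = 0"
  by (simp add: Hop_def Kker_at_pi_half)

lemma Hop_eq_Kslope_integral:
  assumes \<sigma>: "0 < \<sigma>" "\<sigma> < pi/2"
  shows "Hop w \<sigma> = (pi/2 - \<sigma>) / pi * (LINT s|lborel. Kslope \<sigma> s * (indicator {0<..<pi/2} s *\<^sub>R (w s * tan s)))"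
proof -
  have integrand: "indicator {0<..<pi/2} s *\<^sub>R (Kker s \<sigma> * w s)
      = (pi/2 - \<sigma>) * (Kslope \<sigma> s * (indicator {0<..<pi/2} s *\<^sub>R (w s * tan s)))" for s
  proof (cases "s \<in> {0<..<pi/2}")
    case True
    then have "0 < cos s" "0 < sin s"
      by (auto intro!: cos_gt_zero sin_gt_zero)
    then show ?thesis
      using True \<sigma> by (simp add: Kslope_def cot_def tan_def field_simps)
  qed simp
  have "(LINT s:{0<..<pi/2}|lborel. Kker s \<sigma> * w s)
      = (LINT s|lborel. (pi/2 - \<sigma>) * (Kslope \<sigma> s * (indicator {0<..<pi/2} s *\<^sub>R (w s * tan s))))"
    unfolding set_lebesgue_integral_def integrand ..
  then show ?thesis
    by (simp add: Hop_def)
qed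

lemma tan_weight_conditions:
  assumes "set_borel_measurable lborel {0<..<pi/2} w"
    and "AE s in lborel. s \<in> {0<..<pi/2} \<longrightarrow> 0 \<le> w s * tan s \<and> w s * tan s \<le> C"
    and "0 \<le> C"
  shows "(\<lambda>s. indicator {0<..<pi/2} s *\<^sub>R (w s * tan s)) \<in> borel_measurable lborel"
    and "AE s in lborel. 0 \<le> indicator {0<..<pi/2} s *\<^sub>R (w s * tan s)
      \<and> indicator {0<..<pi/2} s *\<^sub>R (w s * tan s) \<le> C"
    and "\<And>s. s \<notin> {0<..<pi/2} \<Longrightarrow> indicator {0<..<pi/2} s *\<^sub>R (w s * tan s) = 0"
    and "0 \<le> C"
proof -
  have "(\<lambda>s. (indicator {0<..<pi/2} s *\<^sub>R w s) * tan s) \<in> borel_measurable lborel"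
    using assms(1) unfolding set_borel_measurable_def by measurable
  then show "(\<lambda>s. indicator {0<..<pi/2} s *\<^sub>R (w s * tan s)) \<in> borel_measurable lborel"
    by (simp add: mult.assoc)
  show "AE s in lborel. 0 \<le> indicator {0<..<pi/2} s *\<^sub>R (w s * tan s)
      \<and> indicator {0<..<pi/2} s *\<^sub>R (w s * tan s) \<le> C"
    using assms(2) by eventually_elim (use assms(3) in \<open>simp add: indicator_def\<close>)
qed (use assms(3) in simp_all)

lemma Hop_slope_tendsto:
  assumes "set_borel_measurable lborel {0<..<pi/2} w"
    and "AE s in lborel. s \<in> {0<..<pi/2} \<longrightarrow> 0 \<le> w s * tan s \<and> w s * tan s \<le> C"
    and "0 \<le> C"
  shows "((\<lambda>\<sigma>. Hop w \<sigma> / (pi/2 - \<sigma>)) \<longlongrightarrow> 2 / pi * (LINT s:{0<..<pi/2}|lborel. w s * tan s))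
    (at_left (pi/2))"
proof -
  have "\<forall>\<^sub>F \<sigma> in at_left (pi/2). \<sigma> \<in> {0<..<pi/2}"
    by (rule eventually_at_left_real) simp
  then have "\<forall>\<^sub>F \<sigma> in at_left (pi/2).
      (LINT s|lborel. Kslope \<sigma> s * (indicator {0<..<pi/2} s *\<^sub>R (w s * tan s))) / pi = Hop w \<sigma> / (pi/2 - \<sigma>)"
    by eventually_elim (simp add: Hop_eq_Kslope_integral)
  moreover have "((\<lambda>\<sigma>. (LINT s|lborel. Kslope \<sigma> s * (indicator {0<..<pi/2} s *\<^sub>R (w s * tan s))) / pi)
      \<longlongrightarrow> 2 / pi * (LINT s:{0<..<pi/2}|lborel. w s * tan s)) (at_left (pi/2))"
    using Kslope_integral_tendsto[OF tan_weight_conditions[OF assms]]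
    by (auto intro: tendsto_eq_intros simp: set_lebesgue_integral_def)
  ultimately show ?thesis
    by (rule Lim_transform_eventually[rotated])
qed

lemma tan_weight_integral_bounds:
  assumes "set_borel_measurable lborel {0<..<pi/2} w"
    and "AE s in lborel. s \<in> {0<..<pi/2} \<longrightarrow> 0 \<le> w s * tan s \<and> w s * tan s \<le> C"
    and "0 \<le> C"
  shows "0 \<le> (LINT s:{0<..<pi/2}|lborel. w s * tan s)"
    and "(LINT s:{0<..<pi/2}|lborel. w s * tan s) \<le> C * (pi/2)"
  using integral_weight_bounds[OF tan_weight_conditions[OF assms]]
  by (simp_all add: set_lebesgue_integral_def)

lemma one_le_alpha0: "1 \<le> alpha0"
proof -
  have "sqrt 8 \<le> sqrt (5\<^sup>2 :: real)"
    by (subst real_sqrt_le_iff) simp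
  then show ?thesis
    by (simp add: alpha0_def)
qed

theorem theorem4p8:
  fixes \<alpha> :: real and \<zeta> :: "real \<Rightarrow> real" and \<eta> :: "real \<Rightarrow> real"
  assumes alpha_pos: "\<alpha> > 0"
    and L2: "in_L2 \<zeta>"
    and nonneg: "AE s in lborel. s \<in> {0<..<pi/2} \<longrightarrow> \<zeta> s \<ge> 0"
    and fixpt: "AE s in lborel. s \<in> {0<..<pi/2} \<longrightarrow> \<zeta> s = Phi \<alpha> \<zeta> s"
    and norm_bd: "L2norm \<zeta> \<le> 9 * sqrt pi / 2"
    and eta_def: "\<eta> = (\<lambda>\<sigma>. \<sigma> + Hop \<zeta> \<sigma> / 3)"
    and eta_range: "\<And>\<sigma>. \<sigma> \<in> {0<..<pi/2} \<Longrightarrow> 0 \<le> \<eta> \<sigma> \<and> \<eta> \<sigma> \<le> pi"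
    and alpha_gt: "\<alpha> > alpha0"
  shows "\<exists>\<beta>. (\<eta> has_real_derivative \<beta>) (at_left (pi/2))
           \<and> 1 - alpha0 / \<alpha> \<le> \<beta> \<and> \<beta> \<le> 1
           \<and> (\<lambda>\<sigma>. \<eta> \<sigma> - (pi/2 - \<beta> * (pi/2 - \<sigma>))) \<in> o[at_left (pi/2)](\<lambda>\<sigma>. pi/2 - \<sigma>)"
proof -
  define \<beta> where "\<beta> = 1 - 2 * (LINT s:{0<..<pi/2}|lborel. \<zeta> s * tan s) / (3 * pi)"
  have "set_borel_measurable lborel {0<..<pi/2} \<zeta>" "0 \<le> 3 / (\<alpha> * pi)"
    using L2 alpha_pos by (simp_all add: in_L2_def)
  note weight = this(1) Phi_fixpoint_tan_bounds[OF alpha_pos nonneg fixpt] this(2)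
  have eta_pi_half: "\<eta> (pi/2) = pi/2"
    by (simp add: eta_def Hop_at_pi_half)
  have "((\<lambda>\<sigma>. 1 - Hop \<zeta> \<sigma> / (pi/2 - \<sigma>) / 3)
      \<longlongrightarrow> 1 - 2 / pi * (LINT s:{0<..<pi/2}|lborel. \<zeta> s * tan s) / 3) (at_left (pi/2))"
    by (intro tendsto_intros Hop_slope_tendsto[OF weight]) simp
  then have "((\<lambda>\<sigma>. 1 - Hop \<zeta> \<sigma> / (pi/2 - \<sigma>) / 3) \<longlongrightarrow> \<beta>) (at_left (pi/2))"
    by (simp add: \<beta>_def ac_simps)
  moreover have "\<forall>\<^sub>F \<sigma> in at_left (pi/2). 1 - Hop \<zeta> \<sigma> / (pi/2 - \<sigma>) / 3 = (\<eta> \<sigma> - \<eta> (pi/2)) / (\<sigma> - pi/2)"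
    by (auto simp: eventually_at_filter eta_def Hop_at_pi_half field_simps)
  ultimately have deriv: "(\<eta> has_real_derivative \<beta>) (at_left (pi/2))"
    by (simp add: has_field_derivative_iff Lim_transform_eventually)
  have "1 \<le> alpha0 * pi"
    using mult_mono[OF one_le_alpha0, of 1 pi] one_le_alpha0 pi_gt3 by simp
  then have "1 - alpha0 / \<alpha> \<le> \<beta>" "\<beta> \<le> 1"
    using tan_weight_integral_bounds[OF weight] alpha_pos by (simp_all add: \<beta>_def field_simps)
  then show ?thesis
    using deriv has_real_derivative_at_left_smallo[OF deriv, unfolded eta_pi_half] by blast
qed

end
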